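(* Let $L,U\in\mathbb{P}_d$ with $L\prec U$ and let $S\in\mathbb{H}_d$ be arbitrary. Write $U-L=P^*P$ and take an eigendecomposition $PSP^*=Q\Lambda Q^*$ with $Q$ unitary and $\Lambda$ real diagonal. Then a solution of $$\max_{L\preceq Z\preceq U}\ \operatorname{tr}(SZ)$$ is given by $Z=L+P^*Q[\operatorname{sgn}(\Lambda)]_+Q^*P$.
   Context: $\mathbb{H}_d$ denotes the $d\times d$ Hermitian matrices and $\mathbb{P}_d$ the $d\times d$ Hermitian positive definite matrices; $\preceq$ ($\prec$) is the Löwner order ($A\preceq B$ iff $B-A$ is positive semidefinite, $A\prec B$ iff $B-A$ is positive definite). For real diagonal $\Lambda$, $[\operatorname{sgn}(\Lambda)]_+$ is the diagonal matrix with $i$-th diagonal entry $1$ if $\lambda_{ii}>0$ and $0$ otherwise. *)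

theory Defs
  imports "HOL-Analysis.Analysis"
begin

text \<open>d x d complex matrices are modelled as complex^'n^'n with 'n a finite index type (d = CARD('n)).\<close>

definition cadj :: "complex^'n^'m \<Rightarrow> complex^'m^'n" where
  "cadj A = (\<chi> i j. cnj (A $ j $ i))"

definition hermitian :: "complex^'n^'n \<Rightarrow> bool" where
  "hermitian A \<longleftrightarrow> cadj A = A"

definition qform :: "complex^'n^'n \<Rightarrow> complex^'n \<Rightarrow> complex" where
  "qform A x = (\<Sum>i\<in>UNIV. cnj (x $ i) * (A *v x) $ i)"

definition psd :: "complex^'n^'n \<Rightarrow> bool" where
  "psd A \<longleftrightarrow> hermitian A \<and> (\<forall>x. 0 \<le> Re (qform A x))"

definition pd :: "complex^'n^'n \<Rightarrow> bool" where
  "pd A \<longleftrightarrow> hermitian A \<and> (\<forall>x. x \<noteq> 0 \<longrightarrow> 0 < Re (qform A x))"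

definition loewner_le :: "complex^'n^'n \<Rightarrow> complex^'n^'n \<Rightarrow> bool" where
  "loewner_le A B \<longleftrightarrow> psd (B - A)"

definition loewner_lt :: "complex^'n^'n \<Rightarrow> complex^'n^'n \<Rightarrow> bool" where
  "loewner_lt A B \<longleftrightarrow> pd (B - A)"

definition unitary :: "complex^'n^'n \<Rightarrow> bool" where
  "unitary Q \<longleftrightarrow> cadj Q ** Q = mat 1 \<and> Q ** cadj Q = mat 1"

definition cdiag :: "complex^'n \<Rightarrow> complex^'n^'n" where
  "cdiag v = (\<chi> i j. if i = j then v $ i else 0)"

definition sgn_plus :: "real^'n \<Rightarrow> complex^'n^'n" where
  "sgn_plus lam = cdiag (\<chi> i. if lam $ i > 0 then 1 else 0)"

end

theory Submission imports Defs begin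

text \<open>With \<open>C = Q\<^sup>* P\<close> we have \<open>U - L = C\<^sup>* C\<close> and \<open>C S C\<^sup>* = \<Lambda>\<close>, and \<open>C\<close> is invertible because
  \<open>U - L\<close> is positive definite. Every \<open>W\<close> with \<open>L \<preceq> W \<preceq> U\<close> is then \<open>L + C\<^sup>* X C\<close> with
  \<open>0 \<preceq> X \<preceq> I\<close>, so the diagonal entries of \<open>X\<close> lie in \<open>[0,1]\<close>, and by cyclicity of the trace
  \<open>tr(S W) = tr(S L) + \<Sum>\<^sub>i \<lambda>\<^sub>i X\<^sub>i\<^sub>i\<close>. This is maximal for \<open>X = [sgn \<Lambda>]\<^sub>+\<close>, which is the
  proposed \<open>Z\<close>.\<close>

lemma cadj_cadj [simp]: "cadj (cadj A) = A"
  by (simp add: cadj_def vec_eq_iff)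

lemma cadj_mult: "cadj (A ** B) = cadj B ** cadj A"
  by (simp add: cadj_def vec_eq_iff matrix_matrix_mult_def mult.commute)

lemma cadj_mat1 [simp]: "cadj (mat 1 :: complex^'n^'n) = mat 1"
  by (simp add: cadj_def vec_eq_iff mat_def)

lemma matrix_mul_diff_left: "(A::complex^'n^'m) ** (B - C) = A ** B - A ** C"
  by (simp add: vec_eq_iff matrix_matrix_mult_def sum_subtractf algebra_simps)

lemma matrix_mul_diff_right: "((B::complex^'n^'m) - C) ** A = B ** A - C ** A"
  by (simp add: vec_eq_iff matrix_matrix_mult_def sum_subtractf algebra_simps)

lemma unitary_mul_cancel:
  assumes "unitary Q"
  shows "A ** Q ** cadj Q = A" and "A ** cadj Q ** Q = A"
  using assms by (metis unitary_def matrix_mul_assoc matrix_mul_rid)+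

lemma sesquilinear_cadj:
  fixes C :: "complex^'n^'m"
  shows "(\<Sum>i\<in>UNIV. cnj (x $ i) * (cadj C *v y) $ i) = (\<Sum>j\<in>UNIV. cnj ((C *v x) $ j) * y $ j)"
proof -
  have "(\<Sum>i\<in>UNIV. cnj (x $ i) * (cadj C *v y) $ i)
      = (\<Sum>i\<in>UNIV. \<Sum>j\<in>UNIV. cnj (x $ i) * cnj (C $ j $ i) * y $ j)"
    unfolding cadj_def matrix_vector_mult_def by (simp add: sum_distrib_left mult.assoc)
  also have "\<dots> = (\<Sum>j\<in>UNIV. \<Sum>i\<in>UNIV. cnj (x $ i) * cnj (C $ j $ i) * y $ j)"
    by (rule sum.swap)
  also have "\<dots> = (\<Sum>j\<in>UNIV. cnj ((C *v x) $ j) * y $ j)"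
    unfolding matrix_vector_mult_def by (simp add: sum_distrib_left mult_ac)
  finally show ?thesis .
qed

lemma qform_congruence:
  fixes C :: "complex^'n^'m" and A :: "complex^'m^'m"
  shows "qform (cadj C ** A ** C) x = qform A (C *v x)"
proof -
  have "(cadj C ** A ** C) *v x = cadj C *v (A *v (C *v x))"
    by (simp add: matrix_vector_mul_assoc matrix_mul_assoc)
  then show ?thesis unfolding qform_def by (simp add: sesquilinear_cadj)
qed

lemma qform_diff: "qform (A - B) x = qform A x - qform B x"
  unfolding qform_def by (simp add: matrix_vector_mult_def algebra_simps sum_subtractf)

lemma qform_axis: "qform X (axis i 1) = X $ i $ i"
  unfolding qform_def matrix_vector_mult_def axis_def
  by (simp add: if_distrib if_distribR cong: if_cong)

lemma qform_cdiag: "qform (cdiag v) x = (\<Sum>i\<in>UNIV. v $ i * (x $ i * cnj (x $ i)))"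
  unfolding qform_def cdiag_def matrix_vector_mult_def
  by (simp add: if_distrib if_distribR complex_norm_square mult_ac cong: if_cong)

lemma trace_cdiag_mult: "trace (cdiag v ** X) = (\<Sum>i\<in>UNIV. v $ i * X $ i $ i)"
  unfolding trace_def cdiag_def matrix_matrix_mult_def
  by (simp add: if_distrib if_distribR cong: if_cong)

lemma psd_congruence:
  fixes C :: "complex^'n^'m" and A :: "complex^'m^'m"
  assumes "psd A"
  shows "psd (cadj C ** A ** C)"
proof -
  have "cadj (cadj C ** A ** C) = cadj C ** A ** C"
    using assms by (simp add: psd_def hermitian_def cadj_mult matrix_mul_assoc)
  then show ?thesis
    using assms by (simp add: psd_def hermitian_def qform_congruence)
qed

lemma psd_cdiag_nonneg:
  assumes "\<And>i. 0 \<le> f i"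
  shows "psd (cdiag (\<chi> i. complex_of_real (f i)))"
proof -
  have "hermitian (cdiag (\<chi> i. complex_of_real (f i)))"
    by (simp add: hermitian_def cadj_def cdiag_def vec_eq_iff)
  moreover have "0 \<le> Re (qform (cdiag (\<chi> i. complex_of_real (f i))) x)" for x
  proof -
    have "Re (qform (cdiag (\<chi> i. complex_of_real (f i))) x) = (\<Sum>i\<in>UNIV. f i * (cmod (x $ i))\<^sup>2)"
      unfolding qform_cdiag by (simp add: complex_norm_square[symmetric] del: of_real_power)
    also have "\<dots> \<ge> 0"
      by (intro sum_nonneg mult_nonneg_nonneg assms) simp
    finally show ?thesis .
  qed
  ultimately show ?thesis by (simp add: psd_def)
qed

lemma psd_sgn_plus: "psd (sgn_plus lam)"
proof -
  have "sgn_plus lam = cdiag (\<chi> i. complex_of_real (if lam $ i > 0 then 1 else 0))"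
    by (simp add: sgn_plus_def cdiag_def vec_eq_iff)
  then show ?thesis by (simp add: psd_cdiag_nonneg)
qed

lemma psd_one_minus_sgn_plus: "psd (mat 1 - sgn_plus lam)"
proof -
  have "mat 1 - sgn_plus lam = cdiag (\<chi> i. complex_of_real (if lam $ i > 0 then 0 else 1))"
    by (simp add: sgn_plus_def cdiag_def mat_def vec_eq_iff)
  then show ?thesis by (simp add: psd_cdiag_nonneg)
qed

lemma pd_gram_invertible:
  fixes C :: "complex^'n^'n"
  assumes "pd (cadj C ** C)"
  obtains R where "R ** C = mat 1" and "C ** R = mat 1"
proof -
  have "x = 0" if "C *v x = 0" for x
  proof -
    have "qform (cadj C ** mat 1 ** C) x = 0"
      using that by (simp only: qform_congruence) (simp add: qform_def)
    then show ?thesis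
      using assms unfolding pd_def by (metis matrix_mul_rid zero_complex.simps(1) less_irrefl)
  qed
  then obtain R where "R ** C = mat 1"
    using matrix_left_invertible_ker by blast
  with that show ?thesis
    using matrix_left_right_inverse by blast
qed

lemma trace_congruence:
  fixes C :: "complex^'n^'m"
  assumes "C ** S ** cadj C = D"
  shows "trace (S ** (cadj C ** X ** C)) = trace (D ** X)"
proof -
  have "trace (S ** (cadj C ** X ** C)) = trace ((S ** cadj C ** X) ** C)"
    by (simp add: matrix_mul_assoc)
  also have "\<dots> = trace (C ** (S ** cadj C ** X))"
    by (rule trace_mul_sym)
  finally show ?thesis
    using assms by (simp add: matrix_mul_assoc)
qed

lemma loewner_interval_congruence_diag:
  fixes C M :: "complex^'n^'n"
  assumes "pd (cadj C ** C)" and "psd M" and "psd (cadj C ** C - M)"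
  obtains X where "M = cadj C ** X ** C" and "\<And>i. 0 \<le> Re (X $ i $ i) \<and> Re (X $ i $ i) \<le> 1"
proof -
  obtain R where RC: "R ** C = mat 1" and CR: "C ** R = mat 1"
    using assms(1) pd_gram_invertible by blast
  define X where "X = cadj R ** M ** R"
  have "cadj C ** X ** C = (cadj (R ** C)) ** M ** (R ** C)"
    by (simp add: X_def cadj_mult matrix_mul_assoc)
  then have "M = cadj C ** X ** C"
    by (simp add: RC)
  moreover have "0 \<le> Re (X $ i $ i) \<and> Re (X $ i $ i) \<le> 1" for i
  proof -
    define v where "v = R *v axis i 1"
    have Xv: "X $ i $ i = qform M v"
      by (simp add: qform_axis[symmetric] X_def v_def qform_congruence)
    have "qform (cadj C ** C) v = qform (cadj C ** mat 1 ** C) v"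
      by simp
    also have "\<dots> = qform (mat 1) (axis i 1)"
      by (simp only: qform_congruence) (simp add: v_def matrix_vector_mul_assoc CR)
    also have "\<dots> = 1"
      by (simp only: qform_axis) (simp add: mat_def)
    finally have "qform (cadj C ** C) v = 1" .
    moreover have "0 \<le> Re (qform (cadj C ** C - M) v)"
      using assms(3) psd_def by blast
    ultimately have "Re (qform M v) \<le> 1"
      by (simp add: qform_diff)
    moreover have "0 \<le> Re (qform M v)"
      using assms(2) by (simp add: psd_def)
    ultimately show ?thesis by (simp add: Xv)
  qed
  ultimately show ?thesis using that by blast
qed

lemma trace_real_diag_le_sgn_plus:
  assumes "\<And>i. 0 \<le> Re (X $ i $ i) \<and> Re (X $ i $ i) \<le> 1"
  shows "Re (trace (cdiag (\<chi> i. complex_of_real (lam $ i)) ** X))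
       \<le> Re (trace (cdiag (\<chi> i. complex_of_real (lam $ i)) ** sgn_plus lam))"
proof -
  have "lam $ i * Re (X $ i $ i) \<le> (if lam $ i > 0 then lam $ i else 0)" for i
    using assms[of i] by (auto intro: mult_left_le mult_nonpos_nonneg)
  then have "(\<Sum>i\<in>UNIV. lam $ i * Re (X $ i $ i)) \<le> (\<Sum>i\<in>UNIV. if lam $ i > 0 then lam $ i else 0)"
    by (rule sum_mono)
  moreover have "lam $ i * Re (sgn_plus lam $ i $ i) = (if lam $ i > 0 then lam $ i else 0)" for i
    by (simp add: sgn_plus_def cdiag_def)
  ultimately show ?thesis
    by (simp add: trace_cdiag_mult)
qed

lemma trace_le_on_loewner_interval:
  fixes C L U S W :: "complex^'n^'n" and lam :: "real^'n"
  assumes "pd (U - L)" and "U - L = cadj C ** C"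
    and "C ** S ** cadj C = cdiag (\<chi> i. complex_of_real (lam $ i))"
    and "loewner_le L W" and "loewner_le W U"
  shows "Re (trace (S ** W)) \<le> Re (trace (S ** (L + cadj C ** sgn_plus lam ** C)))"
proof -
  have "psd (W - L)"
    using assms(4) by (simp add: loewner_le_def)
  moreover have "psd (cadj C ** C - (W - L))"
    using assms(5) by (simp add: loewner_le_def assms(2)[symmetric] algebra_simps)
  ultimately obtain X where X: "W - L = cadj C ** X ** C"
    and "\<And>i. 0 \<le> Re (X $ i $ i) \<and> Re (X $ i $ i) \<le> 1"
    using loewner_interval_congruence_diag assms(1,2) by metis
  from this(2) have "Re (trace (cdiag (\<chi> i. complex_of_real (lam $ i)) ** X))
      \<le> Re (trace (cdiag (\<chi> i. complex_of_real (lam $ i)) ** sgn_plus lam))"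
    by (rule trace_real_diag_le_sgn_plus)
  moreover have "S ** W = S ** L + S ** (cadj C ** X ** C)"
    by (simp add: X[symmetric] matrix_add_ldistrib[symmetric])
  ultimately show ?thesis
    using trace_congruence[OF assms(3)] by (simp add: matrix_add_ldistrib trace_add)
qed

theorem theorem7:
  fixes L U S P Q :: "complex^'n^'n" and lam :: "real^'n"
  assumes "pd L" and "pd U" and "loewner_lt L U"
    and "hermitian S"
    and "U - L = cadj P ** P"
    and "unitary Q"
    and "P ** S ** cadj P = Q ** cdiag (\<chi> i. complex_of_real (lam $ i)) ** cadj Q"
  defines "Z \<equiv> L + cadj P ** Q ** sgn_plus lam ** cadj Q ** P"
  shows "loewner_le L Z \<and> loewner_le Z U \<and>
         (\<forall>W. loewner_le L W \<and> loewner_le W U \<longrightarrow>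
              Re (trace (S ** W)) \<le> Re (trace (S ** Z)))"
proof -
  define C where "C = cadj Q ** P"
  have gram: "U - L = cadj C ** C"
    using assms(5,6) by (simp add: C_def cadj_mult matrix_mul_assoc unitary_mul_cancel)
  have "C ** S ** cadj C = cadj Q ** (P ** S ** cadj P) ** Q"
    by (simp add: C_def cadj_mult matrix_mul_assoc)
  also have "\<dots> = (cadj Q ** Q) ** cdiag (\<chi> i. complex_of_real (lam $ i)) ** (cadj Q ** Q)"
    by (simp add: assms(7) matrix_mul_assoc)
  finally have diag: "C ** S ** cadj C = cdiag (\<chi> i. complex_of_real (lam $ i))"
    using assms(6) by (simp add: unitary_def)
  have ZL: "Z - L = cadj C ** sgn_plus lam ** C"
    by (simp add: Z_def C_def cadj_mult matrix_mul_assoc)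
  have UZ: "U - Z = cadj C ** (mat 1 - sgn_plus lam) ** C"
    using gram ZL[symmetric] by (simp add: matrix_mul_diff_left matrix_mul_diff_right algebra_simps)
  have "Re (trace (S ** W)) \<le> Re (trace (S ** Z))" if "loewner_le L W" "loewner_le W U" for W
    using trace_le_on_loewner_interval[OF _ gram diag that] assms(3)
    by (simp add: loewner_lt_def ZL[symmetric])
  then show ?thesis
    unfolding loewner_le_def ZL UZ
    by (simp add: psd_congruence psd_sgn_plus psd_one_minus_sgn_plus)
qed

end
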